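(* Let $p(x)=a_dx^d+\cdots+a_1x$ be a real polynomial of degree $d\ge2$ with $p(0)=0$, $p'(0)=\lambda>1$, whose Fatou component $\mathcal{F}_\infty$ containing $\infty$ contains an angular region $W_\beta=\{z\ne0:|\arg z|<\beta\}$ for some $\beta>0$, and let $\mathcal{J}_p$ denote its Julia set. Let $\Phi$ be the entire solution of $\Phi(\lambda z)=p(\Phi(z))$, $\Phi(0)=0$, $\Phi'(0)=1$, let $\rho=\log_\lambda d$, and let $F$ be the $1$-periodic holomorphic function on $\{|\Im w|<\beta/\log\lambda\}$ such that for all $\varepsilon>0$, $M>0$, $\Phi(z)=a_d^{-1/(d-1)}\exp\left(z^\rho F(\log_\lambda z)+o(|z|^{-M})\right)$ uniformly as $|z|\to\infty$ in $|\arg z|\le\beta-\varepsilon$. Assume that $\mathcal{J}_p\subset\mathbb{R}^-$ and that $\Phi$ is unbounded on $\mathbb{R}^-$. Then $F$ is not constant.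
   Context: $\mathbb{R}^-$ denotes the negative real half-axis (the Julia set always contains the repelling fixed point $0$, so $\mathcal{J}_p\subset\mathbb{R}^-$ is to be read as $\mathcal{J}_p\subset(-\infty,0]$). $\log_\lambda z=\log z/\log\lambda$. *)

theory Defs
  imports "HOL-Complex_Analysis.Complex_Analysis" "HOL-Computational_Algebra.Polynomial"
begin

definition cpoly :: "real poly \<Rightarrow> complex \<Rightarrow> complex" where
  "cpoly p = poly (map_poly complex_of_real p)"

definition filled_julia :: "real poly \<Rightarrow> complex set" where
  "filled_julia p = {z. bounded (range (\<lambda>n. (cpoly p ^^ n) z))}"

definition julia :: "real poly \<Rightarrow> complex set" where
  "julia p = frontier (filled_julia p)"

text \<open>The Fatou component containing infinity (basin of infinity), intersected with the plane.\<close>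
definition basin_infty :: "real poly \<Rightarrow> complex set" where
  "basin_infty p = {z. filterlim (\<lambda>n. (cpoly p ^^ n) z) at_infinity sequentially}"

definition sector :: "real \<Rightarrow> complex set" where
  "sector \<beta> = {z. z \<noteq> 0 \<and> \<bar>Arg z\<bar> < \<beta>}"

definition clog_base :: "real \<Rightarrow> complex \<Rightarrow> complex" where
  "clog_base b z = Ln z / complex_of_real (ln b)"

end

theory Submission
  imports Defs
begin

(* Suppose F = k is constant, and let V w = G (Phi (exp w)), where G is the Green function of
   the filled Julia set K of p. From G (p u) = d G u, G u = log |u| + O(1), the functional
   equation Phi (lam z) = p (Phi z) and the asymptotics of Phi, one gets
   V w = max 0 (Re (k exp (rho w))) near the real axis. Now V is continuous, harmonic where
   it is positive, and vanishes only where Phi (exp w) lies in K, which is real because the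
   Julia set is. Hence Re k > 0, and by unique continuation V w = Re (k exp (rho w)) on the strip
   |Im w| < pi: at a first angle where Re (k exp (i rho theta)) vanishes, Phi would be real on
   the ray of that angle, contradicting Phi'(0) = 1. This forces rho <= 1/2. Finally Phi is
   unbounded on the negative axis, so V is positive, hence harmonic, at some point of the line
   Im w = pi; there it equals both Re (k exp (rho w)) and Re (k exp (rho (w - 2 pi i))), which
   forces exp (2 pi i rho) = 1, impossible for 0 < rho <= 1/2. *)

lemma constant_on_if_Re_constant:
  fixes f :: "complex \<Rightarrow> complex"
  assumes holo: "f holomorphic_on S" and S: "open S" "connected S"
    and U: "open U" "U \<subseteq> S" "x \<in> U" and Re_f: "\<And>z. z \<in> U \<Longrightarrow> Re (f z) = r"
  shows "f constant_on S"
proof (rule ccontr)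
  assume "\<not> f constant_on S"
  then have "open (f ` U)"
    using open_mapping_thm[OF holo S U(1,2)] by blast
  then obtain e where e: "e > 0" "ball (f x) e \<subseteq> f ` U"
    using U(3) open_contains_ball by blast
  then have "f x + of_real (e / 2) \<in> f ` U"
    by (auto simp: dist_norm)
  then obtain y where "y \<in> U" "f y = f x + of_real (e / 2)"
    by auto
  then show False
    using Re_f[of x] Re_f[of y] U(3) e(1) by simp
qed

lemma Re_eq_if_Re_eq_on_open:
  fixes h g :: "complex \<Rightarrow> complex"
  assumes "h holomorphic_on S" "g holomorphic_on S" and S: "open S" "connected S"
    and U: "open U" "U \<subseteq> S" "x \<in> U" and eq: "\<And>z. z \<in> U \<Longrightarrow> Re (h z) = Re (g z)"
    and "z \<in> S"
  shows "Re (h z) = Re (g z)"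
proof -
  have "(\<lambda>z. h z - g z) constant_on S"
  proof (rule constant_on_if_Re_constant[OF _ S U])
    show "(\<lambda>z. h z - g z) holomorphic_on S"
      using assms(1,2) by (rule holomorphic_on_diff)
    show "Re (h z - g z) = 0" if "z \<in> U" for z
      using eq[OF that] by simp
  qed
  then have "h z - g z = h x - g x"
    using \<open>z \<in> S\<close> U by (auto simp: constant_on_def)
  then have "Re (h z) - Re (g z) = Re (h x) - Re (g x)"
    by (metis minus_complex.sel(1))
  then show ?thesis
    using eq[OF U(3)] by simp
qed

definition harmonic_at :: "(complex \<Rightarrow> real) \<Rightarrow> complex \<Rightarrow> bool" where
  "harmonic_at V z \<longleftrightarrow> (\<exists>r>0. \<exists>h. h holomorphic_on ball z r \<and> (\<forall>w\<in>ball z r. V w = Re (h w)))"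

lemma harmonic_at_compose:
  assumes V: "harmonic_at V (f z)" and f: "f holomorphic_on UNIV"
  shows "harmonic_at (\<lambda>w. V (f w)) z"
proof -
  obtain r h where r: "r > 0" and h: "h holomorphic_on ball (f z) r"
    and V_eq: "\<forall>w\<in>ball (f z) r. V w = Re (h w)"
    using V unfolding harmonic_at_def by blast
  have "open (f -` ball (f z) r)"
    by (rule open_vimage[OF open_ball holomorphic_on_imp_continuous_on[OF f]])
  moreover have "z \<in> f -` ball (f z) r"
    using r by simp
  ultimately obtain s where s: "s > 0" "ball z s \<subseteq> f -` ball (f z) r"
    using open_contains_ball by blast
  have "(h \<circ> f) holomorphic_on ball z s"
    by (rule holomorphic_on_compose_gen[OF holomorphic_on_subset[OF f subset_UNIV] h]) (use s in blast)
  moreover have "\<forall>w\<in>ball z s. V (f w) = Re ((h \<circ> f) w)"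
    using s(2) V_eq by auto
  ultimately show ?thesis
    unfolding harmonic_at_def using s(1) by blast
qed

lemma harmonic_at_cmult:
  assumes "harmonic_at V z"
  shows "harmonic_at (\<lambda>w. c * V w) z"
proof -
  obtain r h where "r > 0" "h holomorphic_on ball z r" "\<forall>w\<in>ball z r. V w = Re (h w)"
    using assms unfolding harmonic_at_def by blast
  moreover have "(\<lambda>w. of_real c * h w) holomorphic_on ball z r"
    using \<open>h holomorphic_on ball z r\<close> by (intro holomorphic_intros)
  ultimately show ?thesis
    unfolding harmonic_at_def by (intro exI[of _ r] exI[of _ "\<lambda>w. of_real c * h w"]) auto
qed

lemma harmonic_eq_Re_holomorphic_at_limit_point:
  fixes V :: "complex \<Rightarrow> real"
  assumes V: "harmonic_at V z" and E: "E holomorphic_on S" "open S" "z \<in> S"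
    and lim: "z islimpt interior {w. V w = Re (E w)}"
  shows "z \<in> interior {w. V w = Re (E w)}"
proof -
  obtain r h where r: "r > 0" and h: "h holomorphic_on ball z r"
    and V_h: "\<forall>w\<in>ball z r. V w = Re (h w)"
    using V unfolding harmonic_at_def by blast
  obtain r1 where r1: "r1 > 0" "ball z r1 \<subseteq> ball z r \<inter> S"
    using E(2,3) r by (metis Int_iff centre_in_ball open_Int open_ball open_contains_ball)
  obtain y where y: "y \<in> interior {w. V w = Re (E w)}" "dist y z < r1"
    using lim r1(1) islimpt_approachable by blast
  have "Re (h w) = Re (E w)" if "w \<in> ball z r1" for w
  proof (rule Re_eq_if_Re_eq_on_open[OF _ _ open_ball connected_ball _ _ _ _ that])
    show "h holomorphic_on ball z r1"
      by (rule holomorphic_on_subset[OF h]) (use r1(2) in blast)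
    show "E holomorphic_on ball z r1"
      by (rule holomorphic_on_subset[OF E(1)]) (use r1(2) in blast)
    show "open (ball z r1 \<inter> interior {w. V w = Re (E w)})"
      by (intro open_Int open_ball open_interior)
    show "y \<in> ball z r1 \<inter> interior {w. V w = Re (E w)}"
      using y by (auto simp: dist_commute)
    show "Re (h w) = Re (E w)" if w: "w \<in> ball z r1 \<inter> interior {w. V w = Re (E w)}" for w
    proof -
      have "w \<in> ball z r" "V w = Re (E w)"
        using w r1(2) interior_subset by blast+
      then show ?thesis
        using V_h by simp
    qed
  qed blast
  then have "ball z r1 \<subseteq> {w. V w = Re (E w)}"
    using V_h r1(2) by auto
  then show ?thesis
    using r1(1) by (auto simp: mem_interior)
qed

text \<open>The set where \<open>V\<close> and \<open>Re E\<close> agree locally is open, and by positivity of \<open>Re E\<close>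
  and unique continuation it is also closed in \<open>S\<close>.\<close>
lemma eq_Re_holomorphic_extend:
  fixes V :: "complex \<Rightarrow> real"
  assumes V_cont: "continuous_on UNIV V" and V_harm: "\<And>z. V z > 0 \<Longrightarrow> harmonic_at V z"
    and S: "open S" "connected S" and E: "E holomorphic_on S" and E_pos: "\<And>z. z \<in> S \<Longrightarrow> Re (E z) > 0"
    and U: "open U" "U \<subseteq> S" "x \<in> U" and eq: "\<And>z. z \<in> U \<Longrightarrow> V z = Re (E z)"
    and "z \<in> S"
  shows "V z = Re (E z)"
proof -
  define A where "A = S \<inter> interior {z. V z = Re (E z)}"
  have "openin (top_of_set S) A"
    unfolding A_def using S(1) by (simp add: open_Int openin_open_Int)
  moreover have "closedin (top_of_set S) A"
    unfolding closedin_limpt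
  proof (intro conjI allI impI)
    fix z assume z: "z islimpt A \<and> z \<in> S"
    have "continuous_on S (\<lambda>z. V z - Re (E z))"
      using E by (intro continuous_intros continuous_on_subset[OF V_cont] holomorphic_on_imp_continuous_on) auto
    then have "closedin (top_of_set S) {z \<in> S. V z - Re (E z) = 0}"
      by (rule continuous_closedin_preimage_constant)
    then have closed_eq: "closedin (top_of_set S) {z \<in> S. V z = Re (E z)}"
      by simp
    have "A \<subseteq> {z \<in> S. V z = Re (E z)}" "A \<subseteq> interior {z. V z = Re (E z)}"
      unfolding A_def using interior_subset by blast+
    then have "z islimpt {z \<in> S. V z = Re (E z)}" "z islimpt interior {z. V z = Re (E z)}"
      using z islimpt_subset by blast+
    moreover have "V z = Re (E z)"
      using closed_eq z calculation(1) unfolding closedin_limpt by blast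
    then have "harmonic_at V z"
      using E_pos z V_harm by simp
    ultimately show "z \<in> A"
      unfolding A_def using harmonic_eq_Re_holomorphic_at_limit_point E S(1) z by blast
  qed (auto simp: A_def)
  moreover have "x \<in> A"
    unfolding A_def using U eq interior_maximal[of U "{z. V z = Re (E z)}"] by auto
  ultimately have "A = S"
    using S(2) unfolding connected_clopen by blast
  then show ?thesis
    using \<open>z \<in> S\<close> interior_subset unfolding A_def by blast
qed

locale poly_dynamics =
  fixes p :: "real poly" and d :: nat
  assumes degree_p: "degree p = d" and two_le_d: "2 \<le> d"
begin

abbreviation P :: "complex \<Rightarrow> complex" where "P \<equiv> cpoly p"

definition ad :: complex where "ad = of_real (lead_coeff p)"

lemma ad_nonzero: "ad \<noteq> 0"
  using degree_p two_le_d by (auto simp: ad_def)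

lemma d_gt_1: "real d > 1"
  using two_le_d by simp

lemma holomorphic_on_funpow_cpoly: "(P ^^ n) holomorphic_on S"
proof (induction n)
  case (Suc n)
  have "P holomorphic_on UNIV"
    unfolding cpoly_def by (intro holomorphic_intros)
  then have "P \<circ> (P ^^ n) holomorphic_on S"
    by (rule holomorphic_on_compose_gen[OF Suc]) simp
  then show ?case
    by (simp add: comp_def)
qed (simp add: id_def)

lemma continuous_on_funpow_cpoly: "continuous_on S (P ^^ n)"
  by (rule holomorphic_on_imp_continuous_on[OF holomorphic_on_funpow_cpoly])

lemma norm_cpoly_minus_leading_le:
  assumes "1 \<le> norm u"
  shows "norm (P u - ad * u ^ d) \<le> (\<Sum>i<d. \<bar>coeff p i\<bar>) * norm u ^ (d - 1)"
proof -
  have "degree (map_poly complex_of_real p) = d"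
    using degree_p by (subst degree_map_poly) auto
  then have "P u = (\<Sum>i\<le>d. of_real (coeff p i) * u ^ i)"
    unfolding cpoly_def poly_altdef by (simp add: coeff_map_poly)
  then have "P u - ad * u ^ d = (\<Sum>i<d. of_real (coeff p i) * u ^ i)"
    using degree_p by (simp add: ad_def lessThan_Suc_atMost[symmetric])
  also have "norm \<dots> \<le> (\<Sum>i<d. \<bar>coeff p i\<bar> * norm u ^ (d - 1))"
  proof (rule order_trans[OF norm_sum sum_mono])
    fix i assume "i \<in> {..<d}"
    then have "norm u ^ i \<le> norm u ^ (d - 1)"
      using assms by (intro power_increasing) auto
    then show "norm (of_real (coeff p i) * u ^ i) \<le> \<bar>coeff p i\<bar> * norm u ^ (d - 1)"
      by (simp add: norm_mult norm_power mult_left_mono)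
  qed
  finally show ?thesis
    by (simp add: sum_distrib_right)
qed

lemma ex_escape_radius:
  "\<exists>R\<ge>1. \<forall>u. R \<le> norm u \<longrightarrow> norm (P u / (ad * u ^ d) - 1) \<le> 1/2 \<and> 2 * norm u \<le> norm (P u)"
proof -
  define S where "S = (\<Sum>i<d. \<bar>coeff p i\<bar>)"
  have ad_pos: "norm ad > 0"
    using ad_nonzero by simp
  define R where "R = max 1 (max (2 * S / norm ad) (4 / norm ad))"
  have "norm (P u / (ad * u ^ d) - 1) \<le> 1/2 \<and> 2 * norm u \<le> norm (P u)" if u: "R \<le> norm u" for u
  proof
    have u1: "1 \<le> norm u"
      using u unfolding R_def by linarith
    have power_d: "norm u ^ d = norm u * norm u ^ (d - 1)"
      using two_le_d by (metis Suc_diff_le diff_Suc_1 le_trans one_le_numeral power_Suc)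
    have "2 * S \<le> norm ad * norm u"
      using u ad_pos unfolding R_def by (simp add: divide_le_eq mult.commute)
    then have "2 * S * norm u ^ (d - 1) \<le> norm ad * norm u * norm u ^ (d - 1)"
      by (rule mult_right_mono) simp
    then have "S * norm u ^ (d - 1) \<le> norm (ad * u ^ d) / 2"
      using power_d by (simp add: norm_mult norm_power algebra_simps)
    then have close: "norm (P u - ad * u ^ d) \<le> norm (ad * u ^ d) / 2"
      using norm_cpoly_minus_leading_le[OF u1] unfolding S_def by linarith
    have leading_nz: "ad * u ^ d \<noteq> 0"
      using ad_nonzero u1 by auto
    have "P u / (ad * u ^ d) - 1 = (P u - ad * u ^ d) / (ad * u ^ d)"
      using leading_nz by (simp add: field_simps)
    then show "norm (P u / (ad * u ^ d) - 1) \<le> 1/2"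
      using close leading_nz by (simp add: norm_divide divide_le_eq)
    have "norm (ad * u ^ d) - norm (P u) \<le> norm (P u - ad * u ^ d)"
      using norm_triangle_ineq2[of "ad * u ^ d" "P u"] by (simp only: norm_minus_commute)
    then have lower: "norm ad * norm u * norm u ^ (d - 1) / 2 \<le> norm (P u)"
      using close power_d by (simp add: norm_mult norm_power mult.assoc)
    have "4 \<le> norm ad * norm u"
      using u ad_pos unfolding R_def by (simp add: divide_le_eq mult.commute)
    then have "4 * norm u ^ (d - 1) \<le> norm ad * norm u * norm u ^ (d - 1)"
      by (rule mult_right_mono) simp
    moreover have "norm u \<le> norm u ^ (d - 1)"
      using power_increasing[of 1 "d - 1" "norm u"] u1 two_le_d by simp
    ultimately show "2 * norm u \<le> norm (P u)"
      using lower by linarith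
  qed
  then show ?thesis
    by (intro exI[of _ R]) (auto simp: R_def)
qed

definition R :: real where
  "R = (SOME R. R \<ge> 1 \<and> (\<forall>u. R \<le> norm u \<longrightarrow>
          norm (P u / (ad * u ^ d) - 1) \<le> 1/2 \<and> 2 * norm u \<le> norm (P u)))"

lemma R_ge_1: "R \<ge> 1"
  and cpoly_over_leading_near_1: "R \<le> norm u \<Longrightarrow> norm (P u / (ad * u ^ d) - 1) \<le> 1/2"
  and norm_cpoly_ge: "R \<le> norm u \<Longrightarrow> 2 * norm u \<le> norm (P u)"
  using someI_ex[OF ex_escape_radius, folded R_def] by auto

lemma norm_funpow_cpoly_ge: "R \<le> norm u \<Longrightarrow> 2 ^ n * norm u \<le> norm ((P ^^ n) u)"
proof (induction n)
  case (Suc n)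
  have "norm u \<le> 2 ^ n * norm u"
    using mult_right_mono[of 1 "2 ^ n" "norm u"] by simp
  then have "R \<le> norm ((P ^^ n) u)"
    using Suc by linarith
  then show ?case
    using Suc norm_cpoly_ge by fastforce
qed simp

lemma norm_le_norm_funpow_cpoly: "R \<le> norm u \<Longrightarrow> norm u \<le> norm ((P ^^ n) u)"
  using norm_funpow_cpoly_ge[of u n] mult_right_mono[of 1 "2 ^ n" "norm u"] by simp

lemma filled_julia_orbit_less_R:
  assumes "w \<in> filled_julia p"
  shows "norm ((P ^^ n) w) < R"
proof (rule ccontr)
  assume "\<not> norm ((P ^^ n) w) < R"
  then have escaped: "R \<le> norm ((P ^^ n) w)"
    by simp
  obtain B where B: "\<And>m. norm ((P ^^ m) w) \<le> B"
    using assms unfolding filled_julia_def bounded_iff by auto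
  obtain m :: nat where m: "B < m"
    using reals_Archimedean2 by blast
  have "real m \<le> 2 ^ m * norm ((P ^^ n) w)"
    using escaped R_ge_1 of_nat_less_two_power[of m] by (smt (verit) mult_le_cancel_left1 zero_le_power)
  also have "\<dots> \<le> norm ((P ^^ (m + n)) w)"
    using norm_funpow_cpoly_ge[OF escaped, of m] by (simp add: funpow_add)
  finally show False
    using B[of "m + n"] m by simp
qed

lemma filled_julia_subset_ball: "filled_julia p \<subseteq> ball 0 R"
  using filled_julia_orbit_less_R[of _ 0] by auto

lemma bounded_filled_julia: "bounded (filled_julia p)"
  using filled_julia_subset_ball bounded_ball bounded_subset by blast

lemma orbit_unbounded_outside_filled_julia:
  assumes "w \<notin> filled_julia p"
  shows "\<exists>n. T < norm ((P ^^ n) w)"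
proof (rule ccontr)
  assume "\<not> ?thesis"
  then have "bounded (range (\<lambda>n. (P ^^ n) w))"
    unfolding bounded_iff by (auto simp: not_less)
  with assms show False
    unfolding filled_julia_def by simp
qed

text \<open>A holomorphic branch of \<open>log (P u / u ^ d)\<close> on \<open>R < norm u\<close>.\<close>
definition log_ratio :: "complex \<Rightarrow> complex" where
  "log_ratio u = Ln (P u / (ad * u ^ d)) + of_real (ln (norm ad))"

lemma Re_log_ratio:
  assumes "R \<le> norm u"
  shows "Re (log_ratio u) = ln (norm (P u)) - d * ln (norm u)"
proof -
  have "u \<noteq> 0" "P u \<noteq> 0"
    using assms R_ge_1 norm_cpoly_ge[OF assms] by auto
  then show ?thesis
    unfolding log_ratio_def using ad_nonzero
    by (simp add: norm_divide norm_mult norm_power ln_div ln_mult ln_realpow)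
qed

lemma norm_log_ratio_le:
  assumes "R \<le> norm u"
  shows "norm (log_ratio u) \<le> ln 2 + pi + \<bar>ln (norm ad)\<bar>"
proof -
  define y where "y = P u / (ad * u ^ d)"
  have near_1: "norm (y - 1) \<le> 1/2"
    unfolding y_def by (rule cpoly_over_leading_near_1[OF assms])
  then have y: "1/2 \<le> norm y" "norm y \<le> 3/2" "y \<noteq> 0"
    using norm_triangle_ineq2[of y 1] norm_triangle_ineq3[of y 1] by auto
  then have "ln (1/2) \<le> ln (norm y)" "ln (norm y) \<le> ln 2"
    by simp_all
  then have "\<bar>Re (Ln y)\<bar> \<le> ln 2"
    using y(3) by (simp add: ln_div abs_le_iff)
  moreover have "\<bar>Im (Ln y)\<bar> \<le> pi"
    using Im_Ln_le_pi[of y] mpi_less_Im_Ln[of y] y(3) by linarith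
  ultimately have "norm (Ln y) \<le> ln 2 + pi"
    using cmod_le[of "Ln y"] by linarith
  then show ?thesis
    unfolding log_ratio_def y_def[symmetric] using norm_triangle_ineq[of "Ln y" "of_real (ln (norm ad))"]
    by simp
qed

lemma holomorphic_on_log_ratio: "log_ratio holomorphic_on {u. R < norm u}"
proof -
  have "P u / (ad * u ^ d) \<notin> \<real>\<^sub>\<le>\<^sub>0" if "R < norm u" for u
  proof -
    have "Re (1 - P u / (ad * u ^ d)) \<le> 1/2"
      using complex_Re_le_cmod[of "1 - P u / (ad * u ^ d)"] cpoly_over_leading_near_1[of u] that
      by (simp add: norm_minus_commute)
    then show ?thesis
      by (simp add: complex_nonpos_Reals_iff)
  qed
  moreover have "ad * u ^ d \<noteq> 0" if "R < norm u" for u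
    using that R_ge_1 ad_nonzero by auto
  moreover have "P holomorphic_on {u. R < norm u}"
    unfolding cpoly_def by (intro holomorphic_intros)
  ultimately show ?thesis
    unfolding log_ratio_def[abs_def] by (intro holomorphic_intros) auto
qed

lemma ex_log_growth_bound:
  "\<exists>C. \<forall>w. \<bar>ln (max (norm (P w)) R) - d * ln (max (norm w) R)\<bar> \<le> C"
proof -
  have "compact (P ` cball 0 R)"
    unfolding cpoly_def by (intro compact_continuous_image continuous_intros compact_cball)
  then obtain M where M: "\<And>w. w \<in> cball 0 R \<Longrightarrow> norm (P w) \<le> M"
    using compact_imp_bounded bounded_iff by (metis image_eqI)
  define C where "C = max (ln 2 + pi + \<bar>ln (norm ad)\<bar>) (ln (max M R) + d * ln R)"
  have "\<bar>ln (max (norm (P w)) R) - d * ln (max (norm w) R)\<bar> \<le> C" for w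
  proof (cases "R \<le> norm w")
    case True
    then have "max (norm (P w)) R = norm (P w)" "max (norm w) R = norm w"
      using norm_cpoly_ge[OF True] R_ge_1 by auto
    then show ?thesis
      using Re_log_ratio[OF True] norm_log_ratio_le[OF True] abs_Re_le_cmod[of "log_ratio w"]
      unfolding C_def by (simp only:)
  next
    case False
    then have "max (norm (P w)) R \<le> max M R"
      using M by (simp add: max.coboundedI1)
    then have "ln (max (norm (P w)) R) \<le> ln (max M R)"
      using R_ge_1 by simp
    moreover have "0 \<le> ln (max (norm (P w)) R)" "0 \<le> d * ln R" "max (norm w) R = R"
      using False R_ge_1 by auto
    ultimately show ?thesis
      unfolding C_def by (intro max.coboundedI2) linarith
  qed
  then show ?thesis
    by blast
qed

definition C :: real where
  "C = (SOME C. \<forall>w. \<bar>ln (max (norm (P w)) R) - d * ln (max (norm w) R)\<bar> \<le> C)"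

lemma log_growth_bound: "\<bar>ln (max (norm (P w)) R) - d * ln (max (norm w) R)\<bar> \<le> C"
  using someI_ex[OF ex_log_growth_bound, folded C_def] by blast

definition green_approx :: "nat \<Rightarrow> complex \<Rightarrow> real" where
  "green_approx n w = ln (max (norm ((P ^^ n) w)) R) / d ^ n"

text \<open>The limit of \<open>green_approx\<close>, written as a telescoping series so that its continuity
  follows from uniform convergence.\<close>
definition green :: "complex \<Rightarrow> real" where
  "green w = green_approx 0 w + (\<Sum>j. green_approx (Suc j) w - green_approx j w)"

lemma green_approx_step: "\<bar>green_approx (Suc n) w - green_approx n w\<bar> \<le> C / d ^ Suc n"
proof -
  have "green_approx (Suc n) w - green_approx n w
      = (ln (max (norm (P ((P ^^ n) w))) R) - d * ln (max (norm ((P ^^ n) w)) R)) / d ^ Suc n"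
    unfolding green_approx_def using two_le_d by (simp add: field_simps)
  then show ?thesis
    using log_growth_bound[of "(P ^^ n) w"] by (simp add: abs_div divide_right_mono)
qed

lemma sums_divide_power_d: "(\<lambda>j. X / d ^ Suc j) sums (X / (real d - 1))"
proof -
  have "(\<lambda>j. X / d ^ Suc j) = (\<lambda>j. (X / d) * (1 / d) ^ j)"
    by (simp add: power_divide)
  moreover have "X / (real d - 1) = (X / d) * (1 / (1 - 1 / d))"
    using d_gt_1 by (simp add: field_simps)
  ultimately show ?thesis
    using d_gt_1 by (simp only:) (intro sums_mult geometric_sums, simp)
qed

lemma summable_divide_power_d: "summable (\<lambda>j. X / d ^ Suc j)"
  using sums_divide_power_d by (rule sums_summable)

lemma summable_green_approx_steps: "summable (\<lambda>j. green_approx (Suc j) w - green_approx j w)"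
  by (rule summable_comparison_test[OF _ summable_divide_power_d]) (use green_approx_step in auto)

lemma green_approx_tendsto: "(\<lambda>n. green_approx n w) \<longlonglongrightarrow> green w"
proof -
  have "(\<lambda>n. green_approx 0 w + (\<Sum>j<n. green_approx (Suc j) w - green_approx j w)) \<longlonglongrightarrow> green w"
    unfolding green_def by (intro tendsto_add tendsto_const summable_LIMSEQ summable_green_approx_steps)
  moreover have "green_approx 0 w + (\<Sum>j<n. green_approx (Suc j) w - green_approx j w) = green_approx n w"
    for n
    using sum_lessThan_telescope[of "\<lambda>j. green_approx j w"] by simp
  ultimately show ?thesis
    by simp
qed

lemma continuous_on_green: "continuous_on UNIV green"
proof -
  have limit: "uniform_limit UNIV (\<lambda>n w. \<Sum>j<n. green_approx (Suc j) w - green_approx j w)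
      (\<lambda>w. \<Sum>j. green_approx (Suc j) w - green_approx j w) sequentially"
    by (rule Weierstrass_m_test[OF _ summable_divide_power_d]) (use green_approx_step in auto)
  have approx_cont: "continuous_on UNIV (green_approx n)" for n
    unfolding green_approx_def
    by (intro continuous_intros continuous_on_compose2[OF continuous_on_funpow_cpoly[of UNIV n]])
      (use R_ge_1 two_le_d in auto)
  have "continuous_on UNIV (\<lambda>w. \<Sum>j. green_approx (Suc j) w - green_approx j w)"
    by (rule uniform_limit_theorem[OF _ limit])
      (auto intro!: always_eventually continuous_on_sum continuous_on_diff approx_cont)
  then show ?thesis
    unfolding green_def[abs_def] by (intro continuous_intros approx_cont)
qed

lemma green_near_log: "\<bar>green w - ln (max (norm w) R)\<bar> \<le> C / (real d - 1)"
proof -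
  have abs_summable: "summable (\<lambda>j. \<bar>green_approx (Suc j) w - green_approx j w\<bar>)"
    by (rule summable_comparison_test[OF _ summable_divide_power_d]) (use green_approx_step in auto)
  have "\<bar>\<Sum>j. green_approx (Suc j) w - green_approx j w\<bar>
      \<le> (\<Sum>j. \<bar>green_approx (Suc j) w - green_approx j w\<bar>)"
    by (rule summable_rabs[OF abs_summable])
  also have "\<dots> \<le> (\<Sum>j. C / d ^ Suc j)"
    by (rule suminf_le[OF _ abs_summable summable_divide_power_d]) (use green_approx_step in auto)
  finally show ?thesis
    unfolding green_def sums_unique[OF sums_divide_power_d, symmetric] by (simp add: green_approx_def)
qed

lemma green_cpoly: "green (P w) = d * green w"
proof -
  have "green_approx n (P w) = d * green_approx (Suc n) w" for n
    unfolding green_approx_def using two_le_d by (simp add: funpow_Suc_right del: funpow.simps)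
  then have "(\<lambda>n. green_approx n (P w)) \<longlonglongrightarrow> d * green w"
    by (simp only:) (intro tendsto_mult tendsto_const LIMSEQ_Suc green_approx_tendsto)
  then show ?thesis
    using green_approx_tendsto LIMSEQ_unique by blast
qed

lemma green_funpow_cpoly: "green ((P ^^ n) w) = d ^ n * green w"
  by (induction n) (simp_all add: green_cpoly)

lemma green_nonneg: "green w \<ge> 0"
proof -
  have "green_approx n w \<ge> 0" for n
    unfolding green_approx_def using R_ge_1 by simp
  then show ?thesis
    using green_approx_tendsto by (metis LIMSEQ_le_const)
qed

lemma green_eq_0_iff: "green w = 0 \<longleftrightarrow> w \<in> filled_julia p"
proof
  assume "w \<in> filled_julia p"
  then have "green_approx n w = ln R * (1 / d) ^ n" for n
    unfolding green_approx_def using filled_julia_orbit_less_R by (simp add: power_divide)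
  moreover have "(\<lambda>n. ln R * (1 / d) ^ n) \<longlonglongrightarrow> 0"
    using d_gt_1 by (intro tendsto_mult_right_zero LIMSEQ_power_zero) auto
  ultimately show "green w = 0"
    using green_approx_tendsto[of w] LIMSEQ_unique by auto
next
  assume "green w = 0"
  show "w \<in> filled_julia p"
  proof (rule ccontr)
    assume "w \<notin> filled_julia p"
    then obtain n where n: "max R (exp (C / (real d - 1) + 1)) < norm ((P ^^ n) w)"
      using orbit_unbounded_outside_filled_julia by blast
    then have "C / (real d - 1) + 1 \<le> ln (max (norm ((P ^^ n) w)) R)"
      using R_ge_1 by (subst ln_ge_iff) auto
    then have "0 < green ((P ^^ n) w)"
      using green_near_log[of "(P ^^ n) w"] by linarith
    then show False
      using \<open>green w = 0\<close> by (simp add: green_funpow_cpoly)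
  qed
qed

definition log_ratio_series :: "complex \<Rightarrow> complex" where
  "log_ratio_series u = (\<Sum>j. log_ratio ((P ^^ j) u) / of_nat (d ^ Suc j))"

lemma norm_log_ratio_series_term_le:
  assumes "R \<le> norm u"
  shows "norm (log_ratio ((P ^^ j) u) / of_nat (d ^ Suc j)) \<le> (ln 2 + pi + \<bar>ln (norm ad)\<bar>) / d ^ Suc j"
proof -
  have "norm (log_ratio ((P ^^ j) u)) \<le> ln 2 + pi + \<bar>ln (norm ad)\<bar>"
    using norm_log_ratio_le[OF order_trans[OF assms norm_le_norm_funpow_cpoly[OF assms]]] .
  then show ?thesis
    using two_le_d by (simp add: norm_divide norm_mult norm_power divide_right_mono)
qed

lemma green_eq_Re_log_ratio_series:
  assumes u: "R \<le> norm u"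
  shows "green u = ln (norm u) + Re (log_ratio_series u)"
proof -
  have orbit: "R \<le> norm ((P ^^ j) u)" for j
    using u norm_le_norm_funpow_cpoly[OF u] by (rule order_trans)
  have "green_approx (Suc j) u - green_approx j u = Re (log_ratio ((P ^^ j) u) / of_nat (d ^ Suc j))" for j
  proof -
    have "ln (norm (P ((P ^^ j) u))) = Re (log_ratio ((P ^^ j) u)) + d * ln (norm ((P ^^ j) u))"
      using Re_log_ratio[OF orbit[of j]] by simp
    then show ?thesis
      using orbit[of j] orbit[of "Suc j"] d_gt_1 unfolding green_approx_def by (simp add: max_def field_simps)
  qed
  moreover have "summable (\<lambda>j. log_ratio ((P ^^ j) u) / of_nat (d ^ Suc j))"
    by (rule summable_comparison_test[OF _ summable_divide_power_d])
      (use norm_log_ratio_series_term_le[OF u] in auto)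
  moreover have "green_approx 0 u = ln (norm u)"
    using u R_ge_1 unfolding green_approx_def by (simp add: max_def)
  ultimately show ?thesis
    unfolding green_def log_ratio_series_def by (simp add: Re_suminf)
qed

lemma holomorphic_on_log_ratio_series: "log_ratio_series holomorphic_on {u. R < norm u}"
proof -
  define \<Omega> :: "complex set" where "\<Omega> = {u. R < norm u}"
  have "open \<Omega>"
    unfolding \<Omega>_def by (intro open_Collect_less continuous_intros)
  have "(P ^^ j) ` \<Omega> \<subseteq> \<Omega>" for j
    unfolding \<Omega>_def using norm_le_norm_funpow_cpoly by (force intro: less_le_trans)
  then have "(log_ratio \<circ> (P ^^ j)) holomorphic_on \<Omega>" for j
    using holomorphic_on_log_ratio unfolding \<Omega>_def
    by (intro holomorphic_on_compose_gen[OF holomorphic_on_funpow_cpoly]) auto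
  then have terms: "(\<lambda>u. log_ratio ((P ^^ j) u) / of_nat (d ^ Suc j)) holomorphic_on \<Omega>" for j
    using two_le_d by (intro holomorphic_on_divide holomorphic_on_const) (auto simp: comp_def)
  have limit: "uniform_limit \<Omega> (\<lambda>n u. \<Sum>j<n. log_ratio ((P ^^ j) u) / of_nat (d ^ Suc j))
      log_ratio_series sequentially"
    unfolding log_ratio_series_def[abs_def]
  proof (rule Weierstrass_m_test[OF _ summable_divide_power_d])
    fix j u assume "u \<in> \<Omega>"
    then show "norm (log_ratio ((P ^^ j) u) / of_nat (d ^ Suc j)) \<le> (ln 2 + pi + \<bar>ln (norm ad)\<bar>) / d ^ Suc j"
      by (intro norm_log_ratio_series_term_le) (simp add: \<Omega>_def)
  qed
  have "log_ratio_series holomorphic_on \<Omega>"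
  proof (rule holomorphic_uniform_sequence[OF \<open>open \<Omega>\<close>])
    show "(\<lambda>u. \<Sum>j<n. log_ratio ((P ^^ j) u) / of_nat (d ^ Suc j)) holomorphic_on \<Omega>" for n
      by (rule holomorphic_on_sum) (rule terms)
    fix x assume "x \<in> \<Omega>"
    then obtain e where "e > 0" "cball x e \<subseteq> \<Omega>"
      using \<open>open \<Omega>\<close> open_contains_cball by blast
    then show "\<exists>e>0. cball x e \<subseteq> \<Omega> \<and> uniform_limit (cball x e)
        (\<lambda>n u. \<Sum>j<n. log_ratio ((P ^^ j) u) / of_nat (d ^ Suc j)) log_ratio_series sequentially"
      using uniform_limit_on_subset[OF limit] by blast
  qed
  then show ?thesis
    unfolding \<Omega>_def .
qed

lemma harmonic_at_green_far:
  assumes u0: "R < norm u0"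
  shows "harmonic_at green u0"
proof -
  define r where "r = norm u0 - R"
  define H where "H u = Ln (u / u0) + of_real (ln (norm u0)) + log_ratio_series u" for u
  have u0_nz: "u0 \<noteq> 0"
    using u0 R_ge_1 by auto
  have far: "R < norm u" if "u \<in> ball u0 r" for u
    using that norm_triangle_ineq2[of u0 u] unfolding r_def by (simp add: dist_norm)
  have "u / u0 \<notin> \<real>\<^sub>\<le>\<^sub>0" if "u \<in> ball u0 r" for u
  proof -
    have "norm (1 - u / u0) = norm (u0 - u) / norm u0"
      using u0_nz by (simp add: norm_divide[symmetric] diff_divide_distrib)
    also have "\<dots> < 1"
      using that u0_nz R_ge_1 unfolding r_def by (simp add: dist_norm)
    finally show ?thesis
      using complex_Re_le_cmod[of "1 - u / u0"] by (auto simp: complex_nonpos_Reals_iff)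
  qed
  then have "H holomorphic_on ball u0 r"
    unfolding H_def[abs_def]
  proof (intro holomorphic_intros)
    show "log_ratio_series holomorphic_on ball u0 r"
      by (rule holomorphic_on_subset[OF holomorphic_on_log_ratio_series]) (use far in blast)
  qed auto
  moreover have "green u = Re (H u)" if "u \<in> ball u0 r" for u
  proof -
    have "u \<noteq> 0"
      using far[OF that] R_ge_1 by auto
    then have "Re (Ln (u / u0)) = ln (norm u) - ln (norm u0)"
      using u0_nz by (simp add: norm_divide ln_div)
    then show ?thesis
      using green_eq_Re_log_ratio_series[of u] far[OF that] unfolding H_def by simp
  qed
  moreover have "r > 0"
    using u0 unfolding r_def by simp
  ultimately show ?thesis
    unfolding harmonic_at_def by blast
qed

lemma harmonic_at_green:
  assumes "0 < green w"
  shows "harmonic_at green w"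
proof -
  have "w \<notin> filled_julia p"
    by (metis assms green_eq_0_iff order_less_irrefl)
  then obtain N where N: "R < norm ((P ^^ N) w)"
    using orbit_unbounded_outside_filled_julia by blast
  have "harmonic_at (\<lambda>z. green ((P ^^ N) z)) w"
    by (rule harmonic_at_compose[OF harmonic_at_green_far[OF N] holomorphic_on_funpow_cpoly])
  then have "harmonic_at (\<lambda>z. 1 / d ^ N * green ((P ^^ N) z)) w"
    by (rule harmonic_at_cmult)
  then show ?thesis
    using two_le_d by (simp add: green_funpow_cpoly)
qed

end

lemma subset_Reals_if_frontier_subset_Reals:
  fixes K :: "complex set"
  assumes "bounded K" and frontier: "frontier K \<subseteq> \<real>"
  shows "K \<subseteq> \<real>"
proof
  fix w assume "w \<in> K"
  show "w \<in> \<real>"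
  proof (rule ccontr)
    assume "w \<notin> \<real>"
    then have Im_w: "Im w \<noteq> 0"
      by (simp add: complex_is_Real_iff)
    define f where "f t = w + of_real t * \<i> * of_real (Im w)" for t
    obtain B where B: "\<And>z. z \<in> K \<Longrightarrow> norm z \<le> B"
      using \<open>bounded K\<close> bounded_iff by blast
    define t where "t = (B + norm w + 1) / \<bar>Im w\<bar>"
    have "0 \<le> B + norm w + 1"
      using B[OF \<open>w \<in> K\<close>] norm_ge_zero[of w] by linarith
    then have "t \<ge> 0"
      unfolding t_def by simp
    have "norm (f t - w) = t * \<bar>Im w\<bar>"
      using \<open>t \<ge> 0\<close> unfolding f_def by (simp add: norm_mult)
    also have "\<dots> = B + norm w + 1"
      using Im_w unfolding t_def by simp
    finally have "norm (f t - w) = B + norm w + 1" .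
    then have "f t \<notin> K"
      using B[of "f t"] norm_triangle_ineq4[of "f t" w] by force
    moreover have "connected (f ` {0..})"
      unfolding f_def by (intro connected_continuous_image connected_Ici continuous_intros)
    ultimately have "f ` {0..} \<inter> frontier K \<noteq> {}"
      using \<open>w \<in> K\<close> \<open>t \<ge> 0\<close> connected_Int_frontier[of "f ` {0..}" K]
      by (force simp: f_def)
    then obtain s where "s \<ge> 0" "f s \<in> \<real>"
      using frontier by auto
    moreover have "Im (f s) = (1 + s) * Im w"
      unfolding f_def by (simp add: algebra_simps)
    ultimately show False
      using Im_w by (simp add: complex_is_Real_iff)
  qed
qed

lemma first_nonpos_point:
  fixes q :: "real \<Rightarrow> real"
  assumes "continuous_on {0..t} q" "0 \<le> t" "q 0 > 0" "q t \<le> 0"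
  obtains b where "0 < b" "b \<le> t" "q b \<le> 0" "\<And>s. 0 \<le> s \<Longrightarrow> s < b \<Longrightarrow> q s > 0"
proof -
  define T where "T = {0..t} \<inter> q -` {..0}"
  have "closed T"
    unfolding T_def using assms(1) by (intro continuous_closed_preimage) auto
  moreover have "t \<in> T" "bdd_below T"
    unfolding T_def using assms by auto
  ultimately have "Inf T \<in> T"
    using closed_contains_Inf by blast
  moreover have "Inf T \<le> s" if "0 \<le> s" "s \<le> t" "q s \<le> 0" for s
    using that \<open>bdd_below T\<close> unfolding T_def by (intro cInf_lower) auto
  moreover have "Inf T \<noteq> 0"
    using \<open>Inf T \<in> T\<close> assms(3) unfolding T_def by auto
  ultimately show ?thesis
    using that[of "Inf T"] unfolding T_def by force
qed

lemma sin_eq_0_if_real_on_ray: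
  fixes f :: "complex \<Rightarrow> complex"
  assumes deriv: "(f has_field_derivative 1) (at 0)" and "f 0 = 0"
    and real: "\<And>r. r > 0 \<Longrightarrow> Im (f (of_real r * cis \<theta>)) = 0"
  shows "sin \<theta> = 0"
proof -
  have "((\<lambda>z. f z / z) \<longlongrightarrow> 1) (at 0)"
    using deriv \<open>f 0 = 0\<close> unfolding has_field_derivative_iff by simp
  moreover have "filterlim (\<lambda>r. of_real r * cis \<theta>) (at 0) (at_right 0)"
    unfolding filterlim_at
    by (auto intro!: tendsto_eq_intros eventually_at_rightI[of 0 1])
  ultimately have "((\<lambda>r. f (of_real r * cis \<theta>) / (of_real r * cis \<theta>)) \<longlongrightarrow> 1) (at_right 0)"
    by (rule filterlim_compose)
  then have "((\<lambda>r. f (of_real r * cis \<theta>) / (of_real r * cis \<theta>) * cis \<theta>) \<longlongrightarrow> 1 * cis \<theta>) (at_right 0)"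
    by (intro tendsto_mult tendsto_const)
  then have "((\<lambda>r. Im (f (of_real r * cis \<theta>) / (of_real r * cis \<theta>) * cis \<theta>)) \<longlongrightarrow> Im (cis \<theta>)) (at_right 0)"
    by (intro tendsto_Im) simp
  moreover have "\<forall>\<^sub>F r in at_right 0. Im (f (of_real r * cis \<theta>) / (of_real r * cis \<theta>) * cis \<theta>) = 0"
    using eventually_at_right_less[of 0] by eventually_elim (simp add: real)
  ultimately have "((\<lambda>r. 0) \<longlongrightarrow> Im (cis \<theta>)) (at_right (0::real))"
    by (rule Lim_transform_eventually)
  from tendsto_unique[OF _ this tendsto_const] have "Im (cis \<theta>) = 0"
    by simp
  then show ?thesis
    by simp
qed

lemma log_coordinates_of_exp:
  fixes w :: complex
  assumes "\<bar>Im w\<bar> < pi"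
  shows "Arg (exp w) = Im w" "exp w powr a = exp (a * w)" "clog_base b (exp w) = w / of_real (ln b)"
proof -
  have "-pi < Im w" "Im w \<le> pi"
    using assms by auto
  then show "Arg (exp w) = Im w" "exp w powr a = exp (a * w)" "clog_base b (exp w) = w / of_real (ln b)"
    unfolding clog_base_def powr_def by (simp_all add: Arg_exp)
qed

lemma eq_0_if_power_mult_bounded:
  fixes x b K :: real
  assumes "1 < b" and bounded: "\<And>n. n \<ge> n0 \<Longrightarrow> b ^ n * \<bar>x\<bar> \<le> K"
  shows "x = 0"
proof (rule ccontr)
  assume "x \<noteq> 0"
  obtain n1 where n1: "K / \<bar>x\<bar> < b ^ n1"
    using real_arch_pow[OF \<open>1 < b\<close>] by blast
  have "b ^ n1 \<le> b ^ max n0 n1"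
    using \<open>1 < b\<close> by (intro power_increasing) auto
  then have "b ^ n1 * \<bar>x\<bar> \<le> b ^ max n0 n1 * \<bar>x\<bar>"
    by (rule mult_right_mono) simp
  moreover have "K < b ^ n1 * \<bar>x\<bar>"
    using n1 \<open>x \<noteq> 0\<close> by (simp add: divide_less_eq)
  ultimately show False
    using bounded[of "max n0 n1"] by linarith
qed

lemma Re_mult_cis_nonpos_on_interval:
  fixes k :: complex and \<rho> \<delta> :: real
  assumes Re_k: "Re k \<le> 0" and "\<rho> > 0" "\<delta> > 0" "\<rho> * \<delta> \<le> pi / 2"
  obtains a b where "a < b" "-\<delta> \<le> a" "b \<le> \<delta>" "\<And>\<theta>. a < \<theta> \<Longrightarrow> \<theta> < b \<Longrightarrow> Re (k * cis (\<rho> * \<theta>)) \<le> 0"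
proof -
  have small: "0 < \<rho> * t" "\<rho> * t < pi / 2" if "0 < t" "t < \<delta>" for t
  proof -
    have "\<rho> * t < \<rho> * \<delta>"
      using that \<open>\<rho> > 0\<close> by simp
    then show "\<rho> * t < pi / 2"
      using assms(4) by linarith
    show "0 < \<rho> * t"
      using that \<open>\<rho> > 0\<close> by simp
  qed
  show ?thesis
  proof (cases "Im k \<ge> 0")
    case True
    show ?thesis
    proof (rule that[of 0 \<delta>])
      fix \<theta> assume "0 < \<theta>" "\<theta> < \<delta>"
      then have "0 < \<rho> * \<theta>" "\<rho> * \<theta> < pi / 2"
        by (rule small)+
      then have "cos (\<rho> * \<theta>) > 0" "sin (\<rho> * \<theta>) > 0"
        by (auto intro!: cos_gt_zero sin_gt_zero)
      then have "Re k * cos (\<rho> * \<theta>) \<le> 0" "Im k * sin (\<rho> * \<theta>) \<ge> 0"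
        using Re_k True by (simp_all add: mult_nonpos_nonneg)
      then show "Re (k * cis (\<rho> * \<theta>)) \<le> 0"
        by simp
    qed (use \<open>\<delta> > 0\<close> in auto)
  next
    case False
    show ?thesis
    proof (rule that[of "-\<delta>" 0])
      fix \<theta> assume "-\<delta> < \<theta>" "\<theta> < 0"
      then have "0 < \<rho> * -\<theta>" "\<rho> * -\<theta> < pi / 2"
        using small[of "-\<theta>"] by auto
      then have "cos (\<rho> * \<theta>) > 0" "sin (\<rho> * \<theta>) < 0"
        using cos_gt_zero_pi[of "\<rho> * \<theta>"] sin_gt_zero[of "\<rho> * -\<theta>"] by auto
      then have "Re k * cos (\<rho> * \<theta>) \<le> 0" "Im k * sin (\<rho> * \<theta>) \<ge> 0"
        using Re_k False by (simp_all add: mult_nonpos_nonneg mult_nonpos_nonpos)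
      then show "Re (k * cis (\<rho> * \<theta>)) \<le> 0"
        by simp
    qed (use \<open>\<delta> > 0\<close> in auto)
  qed
qed

lemma in_closure_horizontal_strip:
  assumes "a < 0" "0 < b" "a \<le> Im w" "Im w \<le> b"
  shows "w \<in> closure {z. a < Im z \<and> Im z < b}"
  unfolding closure_approachable
proof (intro allI impI)
  fix \<epsilon> :: real assume "\<epsilon> > 0"
  define t where "t = min 1 (\<epsilon> / (\<bar>Im w\<bar> + 1))"
  have t: "0 < t" "t \<le> 1" "t * (\<bar>Im w\<bar> + 1) \<le> \<epsilon>"
    using \<open>\<epsilon> > 0\<close> unfolding t_def by (auto simp: min_def pos_le_divide_eq)
  define y where "y = w - \<i> * of_real (t * Im w)"
  have "(1 - t) * a \<le> (1 - t) * Im w" "(1 - t) * Im w \<le> (1 - t) * b" "t * a < 0" "t * b > 0"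
    using t assms by (auto intro: mult_left_mono simp: mult_pos_neg)
  then have "a < Im y \<and> Im y < b"
    unfolding y_def by (simp add: algebra_simps)
  moreover have "dist y w < \<epsilon>"
    using t unfolding y_def dist_norm by (simp add: norm_mult abs_mult algebra_simps)
  ultimately show "\<exists>y\<in>{z. a < Im z \<and> Im z < b}. dist y w < \<epsilon>"
    by blast
qed

lemma eq_0_if_mult_exp_constant_on_ball:
  fixes M :: complex and \<rho> :: real
  assumes "(\<lambda>y. M * exp (of_real \<rho> * y)) constant_on ball w r" "r > 0" "\<rho> \<noteq> 0"
  shows "M = 0"
proof -
  have "w + of_real (r / 2) \<in> ball w r" "w \<in> ball w r"
    using \<open>r > 0\<close> by (auto simp: dist_norm)
  then have "M * exp (of_real \<rho> * (w + of_real (r / 2))) = M * exp (of_real \<rho> * w)"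
    using assms(1) unfolding constant_on_def by metis
  moreover have "exp (of_real \<rho> * (w + of_real (r / 2))) = exp (of_real \<rho> * w) * of_real (exp (\<rho> * r / 2))"
    by (simp add: algebra_simps exp_add flip: exp_of_real)
  moreover have "exp (\<rho> * r / 2) \<noteq> 1"
    using assms(2,3) by simp
  ultimately show "M = 0"
    by (auto simp: algebra_simps)
qed

locale constant_F_setting = poly_dynamics +
  fixes lam \<beta> :: real and \<Phi> F :: "complex \<Rightarrow> complex" and c k :: complex
  assumes lam_gt_1: "lam > 1" and beta_pos: "\<beta> > 0"
    and Phi_holomorphic: "\<Phi> holomorphic_on UNIV"
    and Phi_functional_eq: "\<And>z. \<Phi> (of_real lam * z) = cpoly p (\<Phi> z)"
    and Phi_0: "\<Phi> 0 = 0" and deriv_Phi_0: "deriv \<Phi> 0 = 1"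
    and c_nonzero: "c \<noteq> 0"
    and asymptotics: "\<And>\<epsilon> M \<eta>. \<epsilon> > 0 \<Longrightarrow> M > 0 \<Longrightarrow> \<eta> > 0 \<Longrightarrow>
       \<exists>R. \<forall>z. norm z > R \<and> \<bar>Arg z\<bar> \<le> \<beta> - \<epsilon> \<longrightarrow>
         (\<exists>e. \<Phi> z = c * exp (z powr of_real (ln (real d) / ln lam) * F (clog_base lam z) + e)
              \<and> norm e \<le> \<eta> * norm z powr (- M))"
    and F_constant: "\<And>w. \<bar>Im w\<bar> < \<beta> / ln lam \<Longrightarrow> F w = k"
    and julia_nonpos: "julia p \<subseteq> of_real ` {..0}"
    and Phi_unbounded: "\<not> bounded (\<Phi> ` of_real ` {x. x < 0})"
begin

definition rho :: real where "rho = ln d / ln lam"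

definition V :: "complex \<Rightarrow> real" where "V w = green (\<Phi> (exp w))"

definition E :: "complex \<Rightarrow> complex" where "E w = k * exp (of_real rho * w)"

definition q :: "real \<Rightarrow> real" where "q \<theta> = Re (k * cis (rho * \<theta>))"

lemma ln_lam_pos: "ln lam > 0"
  using lam_gt_1 by simp

lemma rho_pos: "rho > 0"
  unfolding rho_def using ln_lam_pos d_gt_1 by simp

lemma Re_E: "Re (E w) = exp (rho * Re w) * q (Im w)"
  unfolding E_def q_def by (subst exp_eq_polar) (simp add: algebra_simps)

lemma q_eq: "q \<theta> = Re k * cos (rho * \<theta>) - Im k * sin (rho * \<theta>)"
  unfolding q_def by simp

lemma continuous_on_q: "continuous_on S q"
  unfolding q_eq[abs_def] by (intro continuous_intros)

lemma holomorphic_on_E: "E holomorphic_on S"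
  unfolding E_def[abs_def] by (intro holomorphic_intros)

lemma E_add_log_lam: "E (w + of_real (n * ln lam)) = of_real (d ^ n) * E w"
proof -
  have "rho * (n * ln lam) = n * ln d"
    using ln_lam_pos unfolding rho_def by simp
  then have "exp (of_real rho * of_real (n * ln lam)) = (of_real (exp (n * ln d)) :: complex)"
    by (metis exp_of_real of_real_mult)
  also have "\<dots> = of_real (d ^ n)"
    using d_gt_1 by (simp add: exp_of_nat_mult)
  finally show ?thesis
    unfolding E_def by (simp add: distrib_left exp_add)
qed

lemma Phi_power_lam: "\<Phi> (of_real lam ^ n * z) = (P ^^ n) (\<Phi> z)"
  by (induction n) (simp_all add: mult.assoc Phi_functional_eq)

lemma V_add_log_lam: "V (w + of_real (n * ln lam)) = d ^ n * V w"
proof -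
  have "exp (w + of_real (n * ln lam)) = of_real lam ^ n * exp w"
    using lam_gt_1 by (simp add: exp_add exp_of_nat_mult exp_of_real mult.commute)
  then show ?thesis
    unfolding V_def by (simp add: Phi_power_lam green_funpow_cpoly)
qed

lemma V_diff_2pi: "V (w - 2 * of_real pi * \<i>) = V w"
  unfolding V_def by (simp add: exp_diff)

lemma V_nonneg: "V w \<ge> 0"
  unfolding V_def by (rule green_nonneg)

lemma continuous_on_V: "continuous_on UNIV V"
  unfolding V_def[abs_def]
  by (intro continuous_on_compose2[OF continuous_on_green] continuous_on_compose2[OF
        holomorphic_on_imp_continuous_on[OF Phi_holomorphic]] continuous_intros) auto

lemma harmonic_at_V:
  assumes "V w > 0"
  shows "harmonic_at V w"
proof -
  have "(\<lambda>w. \<Phi> (exp w)) holomorphic_on UNIV"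
    using holomorphic_on_compose[OF holomorphic_on_exp holomorphic_on_subset[OF Phi_holomorphic subset_UNIV]]
    by (simp add: comp_def)
  moreover have "harmonic_at green (\<Phi> (exp w))"
    using assms harmonic_at_green unfolding V_def by blast
  ultimately show ?thesis
    unfolding V_def[abs_def] by (intro harmonic_at_compose[where f = "\<lambda>w. \<Phi> (exp w)"])
qed

lemma Im_Phi_exp_eq_0_if_V_eq_0:
  assumes "V w = 0"
  shows "Im (\<Phi> (exp w)) = 0"
proof -
  have "frontier (filled_julia p) \<subseteq> \<real>"
    using julia_nonpos unfolding julia_def by auto
  then have "filled_julia p \<subseteq> \<real>"
    by (rule subset_Reals_if_frontier_subset_Reals[OF bounded_filled_julia])
  then show ?thesis
    using assms green_eq_0_iff unfolding V_def by (auto simp: complex_is_Real_iff)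
qed

lemma Phi_exp_not_real_on_open:
  assumes "open U" "w0 \<in> U"
  shows "\<exists>w\<in>U. Im (\<Phi> (exp w)) \<noteq> 0"
proof (rule ccontr)
  assume "\<not> ?thesis"
  then have real: "\<And>w. w \<in> U \<Longrightarrow> Re (\<i> * \<Phi> (exp w)) = 0"
    by simp
  have "\<not> exp constant_on (UNIV :: complex set)"
    unfolding constant_on_def by (metis UNIV_I exp_eq_1 exp_zero one_complex.sel(1) zero_neq_one)
  then have "open (exp ` U)"
    using open_mapping_thm[OF holomorphic_on_exp open_UNIV connected_UNIV \<open>open U\<close>] by blast
  have "(\<lambda>z. \<i> * \<Phi> z) constant_on UNIV"
    using real assms(2)
    by (intro constant_on_if_Re_constant[OF _ open_UNIV connected_UNIV \<open>open (exp ` U)\<close> subset_UNIV])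
      (auto intro: holomorphic_intros Phi_holomorphic)
  then obtain y where "\<Phi> = (\<lambda>_. y)"
    unfolding constant_on_def by (metis UNIV_I complex_i_not_zero mult_cancel_left)
  then show False
    using deriv_Phi_0 by simp
qed

lemma Phi_exp_asymptotics:
  assumes "\<bar>Im w\<bar> < \<beta>" "\<bar>Im w\<bar> < pi"
  shows "\<exists>T. \<forall>s>T. \<exists>e. \<Phi> (exp (w + of_real s)) = c * exp (E (w + of_real s) + e) \<and> norm e \<le> 1"
proof -
  have eps: "\<beta> - \<bar>Im w\<bar> > 0"
    using assms(1) by simp
  obtain R0 where R0: "\<forall>z. norm z > R0 \<and> \<bar>Arg z\<bar> \<le> \<beta> - (\<beta> - \<bar>Im w\<bar>) \<longrightarrow>
      (\<exists>e. \<Phi> z = c * exp (z powr of_real (ln (real d) / ln lam) * F (clog_base lam z) + e)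
        \<and> norm e \<le> 1 * norm z powr (- 1))"
    using asymptotics[OF eps zero_less_one zero_less_one] by blast
  have "\<exists>e. \<Phi> (exp (w + of_real s)) = c * exp (E (w + of_real s) + e) \<and> norm e \<le> 1"
    if s: "ln (max R0 1) - Re w < s" for s
  proof -
    define z where "z = exp (w + of_real s)"
    have log_z: "Arg z = Im w" "z powr a = exp (a * (w + of_real s))"
      "clog_base lam z = (w + of_real s) / of_real (ln lam)" for a
      unfolding z_def using log_coordinates_of_exp[of "w + of_real s"] assms(2) by auto
    have "ln (max R0 1) < Re w + s"
      using s by simp
    then have "exp (ln (max R0 1)) < exp (Re w + s)"
      by (rule exp_less_mono)
    then have z_large: "max R0 1 < norm z"
      unfolding z_def by simp
    then have "R0 < norm z \<and> \<bar>Arg z\<bar> \<le> \<beta> - (\<beta> - \<bar>Im w\<bar>)"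
      using log_z(1) by simp
    then obtain e where e: "\<Phi> z = c * exp (z powr of_real (ln (real d) / ln lam) * F (clog_base lam z) + e)"
      and e_le: "norm e \<le> 1 * norm z powr (- 1)"
      using R0 by blast
    have "norm z powr (- 1) \<le> 1"
      using z_large by (simp add: powr_minus inverse_le_1_iff)
    moreover have "\<bar>Im (clog_base lam z)\<bar> < \<beta> / ln lam"
      unfolding log_z using assms(1) ln_lam_pos by (simp add: abs_div divide_strict_right_mono)
    then have "F (clog_base lam z) = k"
      by (rule F_constant)
    moreover have "z powr of_real (ln (real d) / ln lam) = exp (of_real rho * (w + of_real s))"
      unfolding log_z rho_def ..
    ultimately have "\<Phi> z = c * exp (E (w + of_real s) + e)" "norm e \<le> 1"
      using e e_le unfolding E_def by (simp_all add: mult.commute)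
    then show ?thesis
      unfolding z_def by blast
  qed
  then show ?thesis
    by blast
qed

lemma V_near_max_Re_E:
  assumes "\<bar>Im w\<bar> < \<beta>" "\<bar>Im w\<bar> < pi"
  shows "\<exists>T. \<forall>s>T. \<bar>V (w + of_real s) - max (Re (E (w + of_real s))) 0\<bar>
    \<le> C / (real d - 1) + \<bar>ln (norm c)\<bar> + 1 + \<bar>ln R\<bar>"
proof -
  obtain T where T: "\<And>s. s > T \<Longrightarrow>
      \<exists>e. \<Phi> (exp (w + of_real s)) = c * exp (E (w + of_real s) + e) \<and> norm e \<le> 1"
    using Phi_exp_asymptotics[OF assms] by blast
  have "\<bar>V (w + of_real s) - max (Re (E (w + of_real s))) 0\<bar>
      \<le> C / (real d - 1) + \<bar>ln (norm c)\<bar> + 1 + \<bar>ln R\<bar>" if "s > T" for s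
  proof -
    define u where "u = \<Phi> (exp (w + of_real s))"
    define A where "A = Re (E (w + of_real s))"
    obtain e where e: "u = c * exp (E (w + of_real s) + e)" "norm e \<le> 1"
      using T[OF \<open>s > T\<close>] unfolding u_def by blast
    have "norm u = norm c * exp (A + Re e)"
      unfolding e(1) A_def by (simp add: norm_mult)
    then have "norm u > 0"
      using c_nonzero by simp
    have ln_u: "ln (norm u) = ln (norm c) + A + Re e"
      using \<open>norm u = norm c * exp (A + Re e)\<close> c_nonzero by (simp add: ln_mult)
    have "\<bar>Re e\<bar> \<le> 1"
      using e(2) abs_Re_le_cmod order_trans by blast
    moreover have "ln (max (norm u) R) = max (ln (norm u)) (ln R)"
      using \<open>norm u > 0\<close> R_ge_1 by (simp add: max_def)
    moreover have "\<bar>max (ln (norm u)) (ln R) - max A 0\<bar> \<le> \<bar>ln (norm u) - A\<bar> + \<bar>ln R\<bar>"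
      by (simp add: max_def abs_if)
    ultimately show ?thesis
      using green_near_log[of u] ln_u unfolding V_def u_def[symmetric] A_def[symmetric] by linarith
  qed
  then show ?thesis
    by blast
qed

lemma V_eq_max_Re_E:
  assumes "\<bar>Im w\<bar> < \<beta>" "\<bar>Im w\<bar> < pi"
  shows "V w = max (Re (E w)) 0"
proof -
  define K where "K = C / (real d - 1) + \<bar>ln (norm c)\<bar> + 1 + \<bar>ln R\<bar>"
  obtain T where T: "\<And>s. s > T \<Longrightarrow> \<bar>V (w + of_real s) - max (Re (E (w + of_real s))) 0\<bar> \<le> K"
    using V_near_max_Re_E[OF assms] unfolding K_def by blast
  obtain n0 :: nat where n0: "T < n0 * ln lam"
    using ex_less_of_nat_mult[OF ln_lam_pos] by blast
  have "real d ^ n * \<bar>V w - max (Re (E w)) 0\<bar> \<le> K" if "n \<ge> n0" for n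
  proof -
    have "n0 * ln lam \<le> n * ln lam"
      using that ln_lam_pos by (simp add: mult_right_mono)
    then have "T < n * ln lam"
      using n0 by linarith
    then have "\<bar>V (w + of_real (n * ln lam)) - max (Re (E (w + of_real (n * ln lam)))) 0\<bar> \<le> K"
      by (rule T)
    then have "\<bar>d ^ n * V w - max (d ^ n * Re (E w)) 0\<bar> \<le> K"
      unfolding V_add_log_lam E_add_log_lam by simp
    moreover have "max (d ^ n * Re (E w)) 0 = d ^ n * max (Re (E w)) 0"
      by (simp add: max_mult_distrib_left)
    ultimately show ?thesis
      by (simp add: abs_mult flip: right_diff_distrib)
  qed
  then have "V w - max (Re (E w)) 0 = 0"
    by (rule eq_0_if_power_mult_bounded[OF d_gt_1])
  then show ?thesis
    by simp
qed

lemma Re_k_pos: "Re k > 0"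
proof (rule ccontr)
  assume "\<not> Re k > 0"
  define \<delta> where "\<delta> = min (min \<beta> pi) (pi / (2 * rho))"
  have "\<delta> \<le> pi / (2 * rho)"
    unfolding \<delta>_def by simp
  then have "rho * \<delta> \<le> pi / 2"
    using rho_pos by (simp add: field_simps)
  moreover have \<delta>: "\<delta> > 0" "\<delta> \<le> \<beta>" "\<delta> \<le> pi"
    unfolding \<delta>_def using beta_pos rho_pos by auto
  ultimately obtain a b where ab: "a < b" "-\<delta> \<le> a" "b \<le> \<delta>"
    and q_nonpos: "\<And>\<theta>. a < \<theta> \<Longrightarrow> \<theta> < b \<Longrightarrow> q \<theta> \<le> 0"
    using Re_mult_cis_nonpos_on_interval[of k rho \<delta>] \<open>\<not> Re k > 0\<close> rho_pos unfolding q_def by auto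
  define U where "U = {w. a < Im w \<and> Im w < b}"
  have "open U"
    unfolding U_def by (intro open_Collect_conj open_Collect_less continuous_intros)
  moreover have "\<i> * of_real ((a + b) / 2) \<in> U"
    unfolding U_def using ab by simp
  moreover have "Im (\<Phi> (exp w)) = 0" if "w \<in> U" for w
  proof (rule Im_Phi_exp_eq_0_if_V_eq_0)
    have "\<bar>Im w\<bar> < \<beta>" "\<bar>Im w\<bar> < pi"
      using that ab \<delta> unfolding U_def by auto
    moreover have "Re (E w) \<le> 0"
      using q_nonpos[of "Im w"] that unfolding U_def Re_E by (simp add: mult_nonneg_nonpos)
    ultimately show "V w = 0"
      using V_eq_max_Re_E by simp
  qed
  ultimately show False
    using Phi_exp_not_real_on_open by blast
qed

lemma q_pos_near_0:
  obtains \<delta> where "\<delta> > 0" "\<And>\<theta>. \<bar>\<theta>\<bar> < \<delta> \<Longrightarrow> q \<theta> > 0"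
proof -
  have "open {\<theta>. 0 < q \<theta>}"
    by (intro open_Collect_less continuous_intros continuous_on_q)
  moreover have "0 \<in> {\<theta>. 0 < q \<theta>}"
    using Re_k_pos by (simp add: q_def)
  ultimately obtain \<delta> where "\<delta> > 0" "ball 0 \<delta> \<subseteq> {\<theta>. 0 < q \<theta>}"
    using open_contains_ball by blast
  then show ?thesis
    using that by (auto simp: subset_iff)
qed

lemma V_eq_Re_E_on_strip:
  assumes "a < 0" "0 < b" and q_pos: "\<And>\<theta>. a < \<theta> \<Longrightarrow> \<theta> < b \<Longrightarrow> q \<theta> > 0"
    and w: "a \<le> Im w" "Im w \<le> b"
  shows "V w = Re (E w)"
proof -
  define S where "S = {z. a < Im z \<and> Im z < b}"
  have "S = {z. a < Im z} \<inter> {z. Im z < b}"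
    unfolding S_def by auto
  then have S: "open S" "connected S"
    by (auto intro!: convex_connected convex_Int convex_halfspace_Im_gt convex_halfspace_Im_lt
        open_halfspace_Im_gt open_halfspace_Im_lt)
  have E_pos: "Re (E z) > 0" if "z \<in> S" for z
    using q_pos[of "Im z"] that unfolding S_def Re_E by simp
  define m where "m = min (min (-a) b) (min \<beta> pi)"
  define U where "U = {z. \<bar>Im z\<bar> < m}"
  have "open U"
    unfolding U_def by (intro open_Collect_less continuous_intros)
  moreover have "U \<subseteq> S" "0 \<in> U"
    unfolding U_def S_def m_def using assms beta_pos by auto
  moreover have "V z = Re (E z)" if "z \<in> U" for z
    using that \<open>U \<subseteq> S\<close> E_pos V_eq_max_Re_E[of z] unfolding U_def m_def by auto
  ultimately have on_S: "V z = Re (E z)" if "z \<in> S" for z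
    using eq_Re_holomorphic_extend[OF continuous_on_V harmonic_at_V S holomorphic_on_E E_pos] that
    by blast
  have "w \<in> closure S"
    unfolding S_def using assms(1,2) w by (rule in_closure_horizontal_strip)
  moreover have "closed {z. V z = Re (E z)}"
    using holomorphic_on_imp_continuous_on[OF holomorphic_on_E]
    by (intro closed_Collect_eq continuous_on_V continuous_intros)
  ultimately show ?thesis
    using closure_minimal[of S "{z. V z = Re (E z)}"] on_S by blast
qed


lemma sin_eq_0_at_strip_edge:
  assumes "a < 0" "0 < b" and q_pos: "\<And>\<theta>. a < \<theta> \<Longrightarrow> \<theta> < b \<Longrightarrow> q \<theta> > 0"
    and edge: "\<theta> = a \<or> \<theta> = b" and "q \<theta> \<le> 0"
  shows "sin \<theta> = 0"
proof (rule sin_eq_0_if_real_on_ray[of \<Phi>])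
  have "\<Phi> field_differentiable at 0"
    using holomorphic_on_imp_differentiable_at[OF Phi_holomorphic] by simp
  then show "(\<Phi> has_field_derivative 1) (at 0)"
    using deriv_Phi_0 DERIV_deriv_iff_field_differentiable by metis
  show "\<Phi> 0 = 0"
    by (rule Phi_0)
  fix r :: real assume "r > 0"
  define w where "w = of_real (ln r) + \<i> * of_real \<theta>"
  have "V w = Re (E w)"
    using edge assms(1,2) by (intro V_eq_Re_E_on_strip[OF assms(1-3)]) (auto simp: w_def)
  also have "\<dots> \<le> 0"
    unfolding Re_E w_def using \<open>q \<theta> \<le> 0\<close> by (simp add: mult_nonneg_nonpos)
  finally have "Im (\<Phi> (exp w)) = 0"
    using V_nonneg[of w] by (intro Im_Phi_exp_eq_0_if_V_eq_0) simp
  moreover have "exp w = of_real r * cis \<theta>"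
    unfolding w_def using \<open>r > 0\<close> by (simp add: exp_add cis_conv_exp exp_of_real)
  ultimately show "Im (\<Phi> (of_real r * cis \<theta>)) = 0"
    by simp
qed

lemma q_pos:
  assumes "-pi < \<theta>" "\<theta> < pi"
  shows "q \<theta> > 0"
proof (rule ccontr)
  assume "\<not> q \<theta> > 0"
  then have "q \<theta> \<le> 0"
    by simp
  obtain \<delta> where \<delta>: "\<delta> > 0" "\<And>t. \<bar>t\<bar> < \<delta> \<Longrightarrow> q t > 0"
    using q_pos_near_0 by blast
  have "q 0 > 0"
    using \<delta> by simp
  show False
  proof (cases "\<theta> \<ge> 0")
    case True
    obtain b where b: "0 < b" "b \<le> \<theta>" "q b \<le> 0" "\<And>s. 0 \<le> s \<Longrightarrow> s < b \<Longrightarrow> q s > 0"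
      using first_nonpos_point[OF continuous_on_q True \<open>q 0 > 0\<close> \<open>q \<theta> \<le> 0\<close>] by blast
    have "q t > 0" if "-\<delta> < t" "t < b" for t
      using b(4)[of t] \<delta>(2)[of t] that by (cases "t \<ge> 0") auto
    then have "sin b = 0"
      using sin_eq_0_at_strip_edge[of "-\<delta>" b b] \<delta>(1) b by auto
    moreover have "sin b > 0"
      using b assms by (intro sin_gt_zero) auto
    ultimately show False
      by simp
  next
    case False
    have "continuous_on {0..-\<theta>} (\<lambda>s. q (- s))"
      by (intro continuous_on_compose2[OF continuous_on_q[of UNIV]] continuous_intros) auto
    then obtain b where b: "0 < b" "b \<le> -\<theta>" "q (- b) \<le> 0" "\<And>s. 0 \<le> s \<Longrightarrow> s < b \<Longrightarrow> q (- s) > 0"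
      using first_nonpos_point[of "-\<theta>" "\<lambda>s. q (- s)"] False \<open>q 0 > 0\<close> \<open>q \<theta> \<le> 0\<close> by auto
    have "q t > 0" if "-b < t" "t < \<delta>" for t
      using b(4)[of "-t"] \<delta>(2)[of t] that by (cases "t \<ge> 0") auto
    then have "sin (- b) = 0"
      using sin_eq_0_at_strip_edge[of "-b" \<delta> "-b"] \<delta>(1) b by auto
    moreover have "sin b > 0"
      using b assms by (intro sin_gt_zero) auto
    ultimately show False
      by simp
  qed
qed

lemma rho_le_half: "rho \<le> 1/2"
proof (rule ccontr)
  assume "\<not> rho \<le> 1/2"
  define \<theta> where "\<theta> = pi / (2 * rho)"
  have "0 < \<theta>" "\<theta> < pi"
    unfolding \<theta>_def using \<open>\<not> rho \<le> 1/2\<close> by (auto simp: field_simps)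
  moreover have rho_\<theta>: "rho * \<theta> = pi / 2" "rho * - \<theta> = - (pi / 2)"
    unfolding \<theta>_def using rho_pos by simp_all
  have "q \<theta> = - Im k" "q (- \<theta>) = Im k"
    unfolding q_eq rho_\<theta> by simp_all
  ultimately show False
    using q_pos[of \<theta>] q_pos[of "- \<theta>"] by simp
qed

lemma V_eq_Re_E:
  assumes "\<bar>Im w\<bar> < pi"
  shows "V w = Re (E w)"
  using assms q_pos by (intro V_eq_Re_E_on_strip[of "-pi" pi]) auto

lemma Re_E_shift_invariant_near_line:
  assumes "Im w0 = pi" "V w0 > 0"
  obtains r where "r > 0" "\<And>y. y \<in> ball w0 r \<Longrightarrow> Re (E y) = Re (E (y - 2 * of_real pi * \<i>))"
proof -
  obtain r h where r: "r > 0" and h: "h holomorphic_on ball w0 r" and V_h: "\<forall>y\<in>ball w0 r. V y = Re (h y)"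
    using harmonic_at_V[OF assms(2)] unfolding harmonic_at_def by blast
  define r1 where "r1 = min r 1"
  have r1: "r1 > 0" "r1 \<le> 1" "ball w0 r1 \<subseteq> ball w0 r"
    unfolding r1_def using r by auto
  have h1: "h holomorphic_on ball w0 r1"
    using h r1(3) by (rule holomorphic_on_subset)
  have Im_near: "\<bar>Im z - pi\<bar> < r1" if "z \<in> ball w0 r1" for z
    using that abs_Im_le_cmod[of "z - w0"] assms(1) by (simp add: dist_norm norm_minus_commute)
  have "pi > 1"
    using pi_gt3 by simp
  have below: "Re (h y) = Re (E y)" if "y \<in> ball w0 r1" for y
  proof (rule Re_eq_if_Re_eq_on_open[OF h1 holomorphic_on_E open_ball connected_ball _ _ _ _ that])
    show "open (ball w0 r1 \<inter> {z. Im z < pi})"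
      by (intro open_Int open_ball open_halfspace_Im_lt)
    show "w0 - \<i> * of_real (r1 / 2) \<in> ball w0 r1 \<inter> {z. Im z < pi}"
      using r1 assms(1) by (simp add: dist_norm norm_mult)
    fix z assume z: "z \<in> ball w0 r1 \<inter> {z. Im z < pi}"
    then have "\<bar>Im z\<bar> < pi"
      using Im_near[of z] r1(2) \<open>pi > 1\<close> by auto
    then have "V z = Re (E z)"
      by (rule V_eq_Re_E)
    moreover have "V z = Re (h z)"
      using V_h z r1(3) by blast
    ultimately show "Re (h z) = Re (E z)"
      by simp
  qed blast
  have above: "Re (h y) = Re (E (y - 2 * of_real pi * \<i>))" if "y \<in> ball w0 r1" for y
  proof (rule Re_eq_if_Re_eq_on_open[OF h1 _ open_ball connected_ball _ _ _ _ that])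
    show "(\<lambda>y. E (y - 2 * of_real pi * \<i>)) holomorphic_on ball w0 r1"
      unfolding E_def by (intro holomorphic_intros)
    show "open (ball w0 r1 \<inter> {z. pi < Im z})"
      by (intro open_Int open_ball open_halfspace_Im_gt)
    show "w0 + \<i> * of_real (r1 / 2) \<in> ball w0 r1 \<inter> {z. pi < Im z}"
      using r1 assms(1) by (simp add: dist_norm norm_mult)
    fix z assume z: "z \<in> ball w0 r1 \<inter> {z. pi < Im z}"
    then have "\<bar>Im (z - 2 * of_real pi * \<i>)\<bar> < pi"
      using Im_near[of z] r1(2) \<open>pi > 1\<close> by auto
    then have "V z = Re (E (z - 2 * of_real pi * \<i>))"
      using V_eq_Re_E V_diff_2pi by metis
    moreover have "V z = Re (h z)"
      using V_h z r1(3) by blast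
    ultimately show "Re (h z) = Re (E (z - 2 * of_real pi * \<i>))"
      by simp
  qed blast
  show ?thesis
    using that[OF r1(1)] below above by simp
qed

lemma Re_E_not_shift_invariant:
  assumes "r > 0"
  shows "\<exists>y\<in>ball w0 r. Re (E y) \<noteq> Re (E (y - 2 * of_real pi * \<i>))"
proof (rule ccontr)
  assume shift_invariant: "\<not> ?thesis"
  define M where "M = k * (1 - exp (- (of_real (2 * pi * rho) * \<i>)))"
  have "E y - E (y - 2 * of_real pi * \<i>) = M * exp (of_real rho * y)" for y
  proof -
    have "exp (of_real rho * (y - 2 * of_real pi * \<i>)) = exp (of_real rho * y) * exp (- (of_real (2 * pi * rho) * \<i>))"
      by (simp add: algebra_simps flip: exp_add)
    then show ?thesis
      unfolding E_def M_def by (simp add: algebra_simps)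
  qed
  then have "Re (M * exp (of_real rho * y)) = 0" if "y \<in> ball w0 r" for y
    using shift_invariant that by (metis minus_complex.sel(1) right_minus_eq)
  moreover have "(\<lambda>y. M * exp (of_real rho * y)) holomorphic_on ball w0 r"
    by (intro holomorphic_intros)
  ultimately have "(\<lambda>y. M * exp (of_real rho * y)) constant_on ball w0 r"
    using assms by (intro constant_on_if_Re_constant[OF _ open_ball connected_ball open_ball subset_refl,
        of _ _ _ w0]) auto
  then have "M = 0"
    using eq_0_if_mult_exp_constant_on_ball assms rho_pos by force
  then have "exp (- (of_real (2 * pi * rho) * \<i>)) = 1"
    using Re_k_pos unfolding M_def by auto
  then obtain n :: int where "- (2 * pi * rho) = of_int (2 * n) * pi"
    unfolding exp_eq_1 by auto
  then have "pi * (rho + n) = 0"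
    by (simp add: algebra_simps)
  then have "rho = of_int (- n)"
    by simp
  then have "0 < - n" "of_int (- n) \<le> (1 / 2 :: real)"
    using rho_pos rho_le_half by simp_all
  then show False
    by linarith
qed

lemma inconsistent: False
proof -
  obtain x where x: "x < 0" "R < norm (\<Phi> (of_real x))"
    using Phi_unbounded unfolding bounded_iff by (auto simp: not_le)
  then have "\<Phi> (of_real x) \<notin> filled_julia p"
    using filled_julia_subset_ball by auto
  then have "green (\<Phi> (of_real x)) > 0"
    using green_eq_0_iff green_nonneg by (metis order_le_less)
  moreover define w0 where "w0 = of_real (ln (- x)) + \<i> * of_real pi"
  moreover have "exp w0 = of_real x"
    unfolding w0_def using x(1) by (simp add: exp_add exp_of_real)
  ultimately have "Im w0 = pi" "V w0 > 0"
    unfolding V_def by simp_all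
  then obtain r where "r > 0" "\<And>y. y \<in> ball w0 r \<Longrightarrow> Re (E y) = Re (E (y - 2 * of_real pi * \<i>))"
    using Re_E_shift_invariant_near_line by blast
  then show False
    using Re_E_not_shift_invariant by blast
qed

end

text \<open>The hypotheses p0, lam, Wbeta, F_holo and F_per are what makes \<open>\<Phi>\<close> and \<open>F\<close> exist.\<close>
theorem corollary2:
  fixes p :: "real poly" and d :: nat and lam \<beta> :: real
    and \<Phi> F :: "complex \<Rightarrow> complex" and c :: complex
  assumes deg: "degree p = d" and d2: "d \<ge> 2"
    and p0: "coeff p 0 = 0"
    and lam: "coeff p 1 = lam" and lam1: "lam > 1"
    and beta: "\<beta> > 0" and Wbeta: "sector \<beta> \<subseteq> basin_infty p"
    and Phi_entire: "\<Phi> holomorphic_on UNIV"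
    and Phi_fe: "\<And>z. \<Phi> (complex_of_real lam * z) = cpoly p (\<Phi> z)"
    and Phi0: "\<Phi> 0 = 0" and Phi'0: "deriv \<Phi> 0 = 1"
    and c: "c ^ (d - 1) = 1 / complex_of_real (lead_coeff p)"
    and F_holo: "F holomorphic_on {w. \<bar>Im w\<bar> < \<beta> / ln lam}"
    and F_per: "\<And>w. \<bar>Im w\<bar> < \<beta> / ln lam \<Longrightarrow> F (w + 1) = F w"
    and asym: "\<And>\<epsilon> M \<eta>. \<epsilon> > 0 \<Longrightarrow> M > 0 \<Longrightarrow> \<eta> > 0 \<Longrightarrow>
       \<exists>R. \<forall>z. norm z > R \<and> \<bar>Arg z\<bar> \<le> \<beta> - \<epsilon> \<longrightarrow>
         (\<exists>e. \<Phi> z = c * exp (z powr complex_of_real (ln (real d) / ln lam)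
                                  * F (clog_base lam z) + e)
              \<and> norm e \<le> \<eta> * norm z powr (- M))"
    and J: "julia p \<subseteq> complex_of_real ` {..0}"
    and unb: "\<not> bounded (\<Phi> ` (complex_of_real ` {x. x < 0}))"
  shows "\<not> (\<exists>k. \<forall>w. \<bar>Im w\<bar> < \<beta> / ln lam \<longrightarrow> F w = k)"
proof
  assume "\<exists>k. \<forall>w. \<bar>Im w\<bar> < \<beta> / ln lam \<longrightarrow> F w = k"
  then obtain k where F_k: "\<And>w. \<bar>Im w\<bar> < \<beta> / ln lam \<Longrightarrow> F w = k"
    by blast
  have "c \<noteq> 0"
    using c deg d2 by (auto simp: power_0_left)
  then interpret constant_F_setting p d lam \<beta> \<Phi> F c k
    using deg d2 lam1 beta Phi_entire Phi_fe Phi0 Phi'0 asym F_k J unb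
    by unfold_locales auto
  show False
    by (rule inconsistent)
qed

end
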